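(* Let $l,u\in\mathcal{R}(\mathbb{R}^{+},\mathbb{R})$ with $l\leq u$ and $\inf_{s\leq t}(u_s-l_s)>0$ for all $t\geq0$. For $y\in\mathcal{R}(\mathbb{R}^{+},\mathbb{R})$ with $l_0\leq y_0\leq u_0$, let $\Gamma_l(y)$ denote the first component $\xi$ of the solution $(\xi,\kappa)$ of the one-barrier problem $RP_l(y)$, and let $\Gamma^u_l(y)$ denote the first component $x$ of the unique solution $(x,k)$ of $RP^u_l(y)$. Define $\Lambda(f)=f-\Theta^u_l(f)$ for $f\in\mathcal{R}(\mathbb{R}^{+},\mathbb{R})$. Then $\Gamma^u_l=\Lambda\circ\Gamma_l$, i.e. $\Gamma^u_l(y)=\Gamma_l(y)-\Theta^u_l(\Gamma_l(y))$ for every such $y$.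
   Context: A function $f:\mathbb{R}^+=[0,\infty)\to\mathbb{R}$ is regulated if it has a left limit $f_{t^-}$ at every $t>0$ and a right limit $f_{t^+}$ at every $t\geq0$; $\mathcal{R}(\mathbb{R}^{+},\mathbb{R})$ is the set of regulated functions. Write $\Delta^+f_t=f_{t^+}-f_t$, $a\wedge b=\min(a,b)$, $a\vee b=\max(a,b)$, $a^+=a\vee0$. For a function $\phi$ of bounded variation, $\phi^r_t=\phi^c_t+\sum_{0<s\leq t}(\phi_s-\phi_{s^-})$ is its right-continuous part ($\phi^c$ the continuous part). $\Theta^{u}_{l}(f)_t=\sup_{s\leq t}\Big(\big((f_s-u_s)\vee(f_{s^+}-u_{s^+})\big)^+\wedge\inf_{s\leq r\leq t}\big[\big((f_r-l_r)\wedge(f_{r^+}-l_{r^+})\big)\vee(f_r-u_r)\big]\Big)$. One-barrier problem $RP_l(y)$ (for $y_0\geq l_0$): the unique pair $(\xi,\kappa)$ with $\xi=y+\kappa\geq l$, $\kappa$ non-decreasing, right-continuous, $\kappa_0=0$, $\int_{[0,\infty[}(\xi_s-l_s)\wedge(\xi_{s^+}-l_{s^+})\,d\kappa_s=0$. Two-barrier problem $RP^u_l(y)$: $(x,k)$ regulated is a solution if there are $\phi^1,\phi^2$ with (i) $x=y+\phi^1-\phi^2$, $k=\phi^1-\phi^2$; (ii) $l\leq x\leq u$; (iii) $\phi^1,\phi^2$ non-decreasing, $\phi^1_0=\phi^2_0=0$; (iv) $\int_{[0,\infty[}\big((x_s-l_s)\wedge(x_{s^+}-l_{s^+})\big)d\phi^{1,r}_s=\int_{[0,\infty[}\big((u_s-x_s)\wedge(u_{s^+}-x_{s^+})\big)d\phi^{2,r}_s=0$;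 (v) for all $t$, $\sum_{s\leq t}(x_{s^+}-l_{s^+})\Delta^+\phi^1_s=\sum_{s\leq t}(u_s-x_s)\Delta^+\phi^1_s=0$ and $\sum_{s\leq t}(u_{s^+}-x_{s^+})\Delta^+\phi^2_s=\sum_{s\leq t}(x_s-l_s)\Delta^+\phi^2_s=0$. Under the hypotheses on $l,u$, this problem has a unique solution for every $y$ with $l_0\leq y_0\leq u_0$. *)

theory Defs
  imports "HOL-Analysis.Analysis"
begin

text \<open>Functions on R+ = [0,oo) are represented as real => real; only values at t >= 0 matter.\<close>

definition rlim :: "(real \<Rightarrow> real) \<Rightarrow> real \<Rightarrow> real" where
  "rlim f t = Lim (at_right t) f"

definition llim :: "(real \<Rightarrow> real) \<Rightarrow> real \<Rightarrow> real" where
  "llim f t = Lim (at_left t) f"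

definition regulated :: "(real \<Rightarrow> real) \<Rightarrow> bool" where
  "regulated f \<longleftrightarrow> (\<forall>t>0. \<exists>L. (f \<longlongrightarrow> L) (at_left t)) \<and>
                    (\<forall>t\<ge>0. \<exists>L. (f \<longlongrightarrow> L) (at_right t))"

definition Theta :: "(real \<Rightarrow> real) \<Rightarrow> (real \<Rightarrow> real) \<Rightarrow> (real \<Rightarrow> real) \<Rightarrow> real \<Rightarrow> real" where
  "Theta u l f t = (SUP s\<in>{0..t}.
      min (max 0 (max (f s - u s) (rlim f s - rlim u s)))
          (INF r\<in>{s..t}. max (min (f r - l r) (rlim f r - rlim l r)) (f r - u r)))"

definition ljumps :: "(real \<Rightarrow> real) \<Rightarrow> real \<Rightarrow> real" where
  "ljumps \<phi> t = (\<Sum>\<^sub>\<infinity>s\<in>{0<..t}. \<phi> s - llim \<phi> s)"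

definition rjumps :: "(real \<Rightarrow> real) \<Rightarrow> real \<Rightarrow> real" where
  "rjumps \<phi> t = (\<Sum>\<^sub>\<infinity>s\<in>{0..<t}. rlim \<phi> s - \<phi> s)"

definition cpart :: "(real \<Rightarrow> real) \<Rightarrow> real \<Rightarrow> real" where
  "cpart \<phi> t = \<phi> t - \<phi> 0 - ljumps \<phi> t - rjumps \<phi> t"

definition rpart :: "(real \<Rightarrow> real) \<Rightarrow> real \<Rightarrow> real" where
  "rpart \<phi> t = cpart \<phi> t + ljumps \<phi> t"

text \<open>Lebesgue--Stieltjes measure of a non-decreasing right-continuous F on [0,oo) with F 0 = 0,
  extended by 0 to the negative half-line (so no atom at 0); integrals over [0,oo[ are taken
  w.r.t. this measure.\<close>
definition LS :: "(real \<Rightarrow> real) \<Rightarrow> real measure" where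
  "LS F = interval_measure (\<lambda>t. F (max 0 t))"

definition RP1 :: "(real \<Rightarrow> real) \<Rightarrow> (real \<Rightarrow> real) \<Rightarrow> (real \<Rightarrow> real) \<Rightarrow> (real \<Rightarrow> real) \<Rightarrow> bool" where
  "RP1 l y \<xi> \<kappa> \<longleftrightarrow>
     (\<forall>t\<ge>0. \<xi> t = y t + \<kappa> t) \<and> (\<forall>t\<ge>0. \<xi> t \<ge> l t) \<and>
     mono_on {0..} \<kappa> \<and> (\<forall>t\<ge>0. (\<kappa> \<longlongrightarrow> \<kappa> t) (at_right t)) \<and> \<kappa> 0 = 0 \<and>
     (\<integral>\<^sup>+ s\<in>{0..}. ennreal (min (\<xi> s - l s) (rlim \<xi> s - rlim l s)) \<partial>LS \<kappa>) = 0"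

definition RP2 :: "(real \<Rightarrow> real) \<Rightarrow> (real \<Rightarrow> real) \<Rightarrow> (real \<Rightarrow> real) \<Rightarrow> (real \<Rightarrow> real) \<Rightarrow> (real \<Rightarrow> real) \<Rightarrow> bool" where
  "RP2 l u y x k \<longleftrightarrow> regulated x \<and> regulated k \<and>
     (\<exists>\<phi>1 \<phi>2.
        (\<forall>t\<ge>0. x t = y t + \<phi>1 t - \<phi>2 t \<and> k t = \<phi>1 t - \<phi>2 t) \<and>
        (\<forall>t\<ge>0. l t \<le> x t \<and> x t \<le> u t) \<and>
        mono_on {0..} \<phi>1 \<and> mono_on {0..} \<phi>2 \<and> \<phi>1 0 = 0 \<and> \<phi>2 0 = 0 \<and>
        (\<integral>\<^sup>+ s\<in>{0..}. ennreal (min (x s - l s) (rlim x s - rlim l s)) \<partial>LS (rpart \<phi>1)) = 0 \<and>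
        (\<integral>\<^sup>+ s\<in>{0..}. ennreal (min (u s - x s) (rlim u s - rlim x s)) \<partial>LS (rpart \<phi>2)) = 0 \<and>
        (\<forall>t\<ge>0.
           (\<Sum>\<^sub>\<infinity>s\<in>{0..t}. (rlim x s - rlim l s) * (rlim \<phi>1 s - \<phi>1 s)) = 0 \<and>
           (\<Sum>\<^sub>\<infinity>s\<in>{0..t}. (u s - x s) * (rlim \<phi>1 s - \<phi>1 s)) = 0 \<and>
           (\<Sum>\<^sub>\<infinity>s\<in>{0..t}. (rlim u s - rlim x s) * (rlim \<phi>2 s - \<phi>2 s)) = 0 \<and>
           (\<Sum>\<^sub>\<infinity>s\<in>{0..t}. (x s - l s) * (rlim \<phi>2 s - \<phi>2 s)) = 0))"

end

theory Submission
  imports Defs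
begin

text \<open>
  Put \<open>\<eta> = \<xi> - x = \<kappa> - \<phi>1 + \<phi>2\<close>. The measures \<open>d\<kappa>\<close>, \<open>d\<phi>1\<close>, \<open>d\<phi>2\<close> are carried by the times at
  which \<open>\<xi>\<close> touches \<open>l\<close>, \<open>x\<close> touches \<open>l\<close> and \<open>x\<close> touches \<open>u\<close>, where touching by the right limit
  counts as well. So \<open>\<eta>\<close> can decrease only while \<open>x\<close> is at \<open>l\<close>, where \<open>\<eta> = \<xi> - l\<close>, and can increase
  only while \<open>x\<close> is at \<open>u\<close>, where \<open>\<eta> = \<xi> - u\<close>, or while \<open>\<xi>\<close> is at \<open>l\<close>, where \<open>\<eta> \<le> 0\<close>.

  If \<open>\<eta> t\<close> were below the \<open>s\<close>-th term of \<open>\<Theta>(\<xi>) t\<close>, then \<open>\<eta>\<close>, which starts above that level at \<open>s\<close>,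
  would fall below it in \<open>[s, t]\<close>; at the first such time \<open>x\<close> is at \<open>l\<close> and \<open>\<eta>\<close> equals the room
  \<open>\<xi> - l\<close>, which exceeds the level. Conversely, at the last time \<open>\<sigma> \<le> t\<close> at which \<open>\<eta>\<close> is below
  \<open>\<eta> t\<close>, \<open>\<eta>\<close> rises, by a jump of \<open>\<phi>2\<close> or continuously at a contact of \<open>x\<close> with \<open>u\<close>; there
  \<open>\<xi> - u\<close> is close to \<open>\<eta> t\<close>, and afterwards \<open>\<eta>\<close> stays above \<open>\<eta> t\<close>, so the corresponding term
  of \<open>\<Theta>(\<xi>) t\<close> is almost \<open>\<eta> t\<close>.
\<close>

section \<open>One-sided limits and passage times\<close>

lemma rlim_eqI: "(f \<longlongrightarrow> L) (at_right t) \<Longrightarrow> rlim f t = L"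
  by (simp add: rlim_def tendsto_Lim)

lemma regulated_tendsto_rlim:
  assumes "regulated f" "0 \<le> t"
  shows "(f \<longlongrightarrow> rlim f t) (at_right t)"
  using assms rlim_eqI unfolding regulated_def by metis

lemma eventually_at_right_interval:
  "t < b \<Longrightarrow> (\<And>r. t < r \<Longrightarrow> r < b \<Longrightarrow> P r) \<Longrightarrow> eventually P (at_right (t::real))"
  unfolding eventually_at_right_field by blast

lemma tendsto_at_right_realE:
  fixes f :: "real \<Rightarrow> real"
  assumes "(f \<longlongrightarrow> L) (at_right t)" "0 < e"
  obtains b where "t < b" "\<And>r. t < r \<Longrightarrow> r < b \<Longrightarrow> \<bar>f r - L\<bar> < e"
proof -
  have "eventually (\<lambda>r. dist (f r) L < e) (at_right t)"
    using assms tendsto_iff by blast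
  then show thesis
    using that unfolding eventually_at_right_field dist_real_def by blast
qed

lemma tendsto_at_right_lowerbound:
  fixes f :: "real \<Rightarrow> real"
  assumes "(f \<longlongrightarrow> L) (at_right t)" "t < b" "\<And>r. t < r \<Longrightarrow> r < b \<Longrightarrow> c \<le> f r"
  shows "c \<le> L"
  using tendsto_lowerbound[OF assms(1) eventually_at_right_interval[OF assms(2,3)]] by simp

lemma tendsto_at_right_upperbound:
  fixes f :: "real \<Rightarrow> real"
  assumes "(f \<longlongrightarrow> L) (at_right t)" "t < b" "\<And>r. t < r \<Longrightarrow> r < b \<Longrightarrow> f r \<le> c"
  shows "L \<le> c"
  using tendsto_upperbound[OF assms(1) eventually_at_right_interval[OF assms(2,3)]] by simp

lemma tendsto_at_right_le:
  fixes f g :: "real \<Rightarrow> real" and t :: real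
  assumes "(f \<longlongrightarrow> a) (at_right t)" "(g \<longlongrightarrow> b) (at_right t)" "\<And>r. t < r \<Longrightarrow> f r \<le> g r"
  shows "a \<le> b"
proof -
  have "eventually (\<lambda>r. f r \<le> g r) (at_right t)"
    by (rule eventually_at_right_interval[of t "t + 1"]) (use assms(3) in auto)
  then show ?thesis
    by (rule tendsto_le[OF trivial_limit_at_right_real assms(2,1)])
qed

lemma tendsto_at_right_cong:
  fixes t :: real
  assumes "(f \<longlongrightarrow> L) (at_right t)" "\<And>r. t < r \<Longrightarrow> f r = g r"
  shows "(g \<longlongrightarrow> L) (at_right t)"
proof -
  have "eventually (\<lambda>r. f r = g r) (at_right t)"
    by (rule eventually_at_right_interval[of t "t + 1"]) (use assms(2) in auto)
  then show ?thesis
    using tendsto_cong assms(1) by blast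
qed

lemma tendsto_at_right_le_if_frequently:
  fixes f :: "real \<Rightarrow> real"
  assumes "(f \<longlongrightarrow> L) (at_right t)" "\<And>b. t < b \<Longrightarrow> \<exists>r\<in>{t<..<b}. f r < c"
  shows "L \<le> c"
proof (rule ccontr)
  assume "\<not> L \<le> c"
  then obtain b where "t < b" "\<And>r. t < r \<Longrightarrow> r < b \<Longrightarrow> \<bar>f r - L\<bar> < L - c"
    using tendsto_at_right_realE[OF assms(1), of "L - c"] by auto
  then show False
    using assms(2)[of b] by (force simp: abs_less_iff)
qed

lemma first_passage:
  fixes E :: "real set"
  assumes "t \<in> E" "E \<subseteq> {s..t}"
  obtains \<rho> where "s \<le> \<rho>" "\<rho> \<le> t" "\<And>r. r < \<rho> \<Longrightarrow> r \<notin> E"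
    "\<And>b. \<rho> \<notin> E \<Longrightarrow> \<rho> < b \<Longrightarrow> \<exists>e\<in>{\<rho><..<b}. e \<in> E"
proof
  have bdd: "bdd_below E"
    by (rule bdd_belowI[of _ s]) (use assms(2) in auto)
  show "s \<le> Inf E" "Inf E \<le> t"
    using assms cInf_lower[OF assms(1) bdd] by (auto intro!: cInf_greatest)
  show "r \<notin> E" if "r < Inf E" for r
    using cInf_lower[OF _ bdd, of r] that by auto
  show "\<exists>e\<in>{Inf E<..<b}. e \<in> E" if not_in: "Inf E \<notin> E" and less: "Inf E < b" for b
  proof -
    obtain e where "e \<in> E" "e < b"
      using cInf_less_iff[OF _ bdd] assms(1) less by blast
    moreover have "Inf E < e"
      using cInf_lower[OF \<open>e \<in> E\<close> bdd] not_in \<open>e \<in> E\<close> by (cases "e = Inf E") auto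
    ultimately show ?thesis
      by auto
  qed
qed

lemma last_passage:
  fixes E :: "real set"
  assumes "s \<in> E" "E \<subseteq> {s..t}"
  obtains \<sigma> where "s \<le> \<sigma>" "\<sigma> \<le> t" "\<And>r. \<sigma> < r \<Longrightarrow> r \<notin> E"
    "\<And>b. \<sigma> \<notin> E \<Longrightarrow> b < \<sigma> \<Longrightarrow> \<exists>e\<in>{b<..<\<sigma>}. e \<in> E"
proof
  have bdd: "bdd_above E"
    by (rule bdd_aboveI[of _ t]) (use assms(2) in auto)
  show "s \<le> Sup E" "Sup E \<le> t"
    using assms cSup_upper[OF assms(1) bdd] by (auto intro!: cSup_least)
  show "r \<notin> E" if "Sup E < r" for r
    using cSup_upper[OF _ bdd, of r] that by auto
  show "\<exists>e\<in>{b<..<Sup E}. e \<in> E" if not_in: "Sup E \<notin> E" and less: "b < Sup E" for b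
  proof -
    obtain e where "e \<in> E" "b < e"
      using less_cSup_iff[OF _ bdd] assms(1) less by blast
    moreover have "e < Sup E"
      using cSup_upper[OF \<open>e \<in> E\<close> bdd] not_in \<open>e \<in> E\<close> by (cases "e = Sup E") auto
    ultimately show ?thesis
      by auto
  qed
qed

section \<open>Monotone functions: jumps, right-continuous part and Stieltjes measure\<close>

lemma mono_on_rlim:
  assumes m: "mono_on {0..} \<phi>" and t: "0 \<le> t"
  shows mono_on_tendsto_rlim: "(\<phi> \<longlongrightarrow> rlim \<phi> t) (at_right t)"
    and mono_on_le_rlim: "\<phi> t \<le> rlim \<phi> t"
    and mono_on_rlim_le: "\<And>r. t < r \<Longrightarrow> rlim \<phi> t \<le> \<phi> r"
proof -
  have "(\<phi> \<longlongrightarrow> Inf (\<phi> ` ({t<..} \<inter> {0..}))) (at t within ({t<..} \<inter> {0..}))"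
    by (rule Lim_right_bound[where K = "\<phi> t"]) (use m t in \<open>auto simp: mono_on_def\<close>)
  moreover have "{t<..} \<inter> {0..} = {t<..}"
    using t by auto
  ultimately show lim: "(\<phi> \<longlongrightarrow> rlim \<phi> t) (at_right t)"
    using rlim_eqI by metis
  show "\<phi> t \<le> rlim \<phi> t"
    by (rule tendsto_at_right_lowerbound[OF lim, of "t + 1"]) (use m t in \<open>auto simp: mono_on_def\<close>)
  show "rlim \<phi> t \<le> \<phi> r" if "t < r" for r
    by (rule tendsto_at_right_upperbound[OF lim that]) (use m t that in \<open>auto simp: mono_on_def\<close>)
qed

lemma mono_on_jump_nonneg: "mono_on {0..} \<phi> \<Longrightarrow> 0 \<le> s \<Longrightarrow> 0 \<le> rlim \<phi> s - \<phi> s"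
  using mono_on_le_rlim by fastforce

lemma mono_on_jump_sum_le:
  assumes m: "mono_on {0..} \<phi>" and "finite F" "0 \<le> a"
  shows "F \<subseteq> {a..<b} \<Longrightarrow> a \<le> b \<Longrightarrow> (\<Sum>s\<in>F. rlim \<phi> s - \<phi> s) \<le> \<phi> b - \<phi> a"
  using \<open>finite F\<close>
proof (induction F arbitrary: b rule: finite_linorder_max_induct)
  case empty
  then show ?case
    using m \<open>0 \<le> a\<close> by (auto simp: mono_on_def)
next
  case (insert s F)
  have "(\<Sum>r\<in>insert s F. rlim \<phi> r - \<phi> r) = (rlim \<phi> s - \<phi> s) + (\<Sum>r\<in>F. rlim \<phi> r - \<phi> r)"
    using insert by (subst sum.insert) auto
  also have "(\<Sum>r\<in>F. rlim \<phi> r - \<phi> r) \<le> \<phi> s - \<phi> a"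
    using insert by (intro insert.IH) auto
  also have "rlim \<phi> s \<le> \<phi> b"
    using mono_on_rlim_le[OF m, of s b] insert \<open>0 \<le> a\<close> by auto
  finally show ?case
    by simp
qed

lemma mono_on_jumps_summable_on:
  assumes m: "mono_on {0..} \<phi>" and A: "A \<subseteq> {0..<b}"
  shows "(\<lambda>s. rlim \<phi> s - \<phi> s) summable_on A"
proof (rule nonneg_bdd_above_summable_on)
  show "0 \<le> rlim \<phi> s - \<phi> s" if "s \<in> A" for s
    using A that mono_on_jump_nonneg[OF m] by auto
  show "bdd_above (sum (\<lambda>s. rlim \<phi> s - \<phi> s) ` {F. F \<subseteq> A \<and> finite F})"
  proof (rule bdd_aboveI[of _ "\<bar>\<phi> b - \<phi> 0\<bar>"])
    fix z assume "z \<in> sum (\<lambda>s. rlim \<phi> s - \<phi> s) ` {F. F \<subseteq> A \<and> finite F}"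
    then obtain F where "F \<subseteq> A" "finite F" "z = (\<Sum>s\<in>F. rlim \<phi> s - \<phi> s)"
      by auto
    moreover have "0 \<le> b" if "A \<noteq> {}"
      using A that by auto
    ultimately show "z \<le> \<bar>\<phi> b - \<phi> 0\<bar>"
      using mono_on_jump_sum_le[OF m \<open>finite F\<close>, of 0 b] A by (cases "A = {}") force+
  qed
qed

lemma mono_on_jumps_infsum_le_Sup:
  assumes m: "mono_on {0..} \<phi>" and r: "0 \<le> r" "r < s"
  shows "(\<Sum>\<^sub>\<infinity>x\<in>{r..<s}. rlim \<phi> x - \<phi> x) \<le> (SUP x\<in>{0..<s}. \<phi> x) - \<phi> r"
proof (rule infsum_le_finite_sums[OF mono_on_jumps_summable_on[OF m]])
  show "{r..<s} \<subseteq> {0..<s}"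
    using r by auto
  have bdd: "bdd_above (\<phi> ` {0..<s})"
    by (rule bdd_aboveI[of _ "\<phi> s"]) (use m in \<open>auto simp: mono_on_def\<close>)
  fix F assume F: "finite F" "F \<subseteq> {r..<s}"
  show "(\<Sum>x\<in>F. rlim \<phi> x - \<phi> x) \<le> (SUP x\<in>{0..<s}. \<phi> x) - \<phi> r"
  proof (cases "F = {}")
    case True
    have "\<phi> r \<le> (SUP x\<in>{0..<s}. \<phi> x)"
      by (rule cSUP_upper[OF _ bdd]) (use r in auto)
    then show ?thesis
      using True by simp
  next
    case False
    define m' where "m' = (Max F + s) / 2"
    have "Max F \<in> F"
      using F False by auto
    then have Max: "r \<le> Max F" "Max F < s"
      using F by auto
    have "F \<subseteq> {r..<m'}"
    proof
      fix x assume "x \<in> F"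
      then show "x \<in> {r..<m'}"
        using F(2) Max_ge[OF F(1) \<open>x \<in> F\<close>] Max(2) by (auto simp: m'_def)
    qed
    then have "(\<Sum>x\<in>F. rlim \<phi> x - \<phi> x) \<le> \<phi> m' - \<phi> r"
      by (rule mono_on_jump_sum_le[OF m F(1) r(1)]) (use Max in \<open>auto simp: m'_def\<close>)
    also have "\<phi> m' \<le> (SUP x\<in>{0..<s}. \<phi> x)"
      by (rule cSUP_upper[OF _ bdd]) (use Max r in \<open>auto simp: m'_def\<close>)
    finally show ?thesis
      by simp
  qed
qed

lemma rpart_eq: "rpart \<phi> t = \<phi> t - \<phi> 0 - (\<Sum>\<^sub>\<infinity>s\<in>{0..<t}. rlim \<phi> s - \<phi> s)"
  unfolding rpart_def cpart_def rjumps_def by simp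

lemma rpart_diff:
  assumes m: "mono_on {0..} \<phi>" and "0 \<le> a" "a \<le> b"
  shows "rpart \<phi> b - rpart \<phi> a = \<phi> b - \<phi> a - (\<Sum>\<^sub>\<infinity>s\<in>{a..<b}. rlim \<phi> s - \<phi> s)"
proof -
  have "{0..<b} = {0..<a} \<union> {a..<b}"
    using assms by auto
  then have "(\<Sum>\<^sub>\<infinity>s\<in>{0..<b}. rlim \<phi> s - \<phi> s) =
      (\<Sum>\<^sub>\<infinity>s\<in>{0..<a}. rlim \<phi> s - \<phi> s) + (\<Sum>\<^sub>\<infinity>s\<in>{a..<b}. rlim \<phi> s - \<phi> s)"
    using assms by (simp, intro infsum_Un_disjoint mono_on_jumps_summable_on[OF m]) auto
  then show ?thesis
    unfolding rpart_eq by simp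
qed

lemma rpart_mono:
  assumes m: "mono_on {0..} \<phi>" and "0 \<le> a" "a \<le> b"
  shows "rpart \<phi> a \<le> rpart \<phi> b"
proof -
  have "(\<Sum>\<^sub>\<infinity>s\<in>{a..<b}. rlim \<phi> s - \<phi> s) \<le> \<phi> b - \<phi> a"
    by (rule infsum_le_finite_sums[OF mono_on_jumps_summable_on[OF m]])
      (use mono_on_jump_sum_le[OF m] assms in auto)
  then show ?thesis
    using rpart_diff[OF assms] by simp
qed

lemma rpart_tendsto_at_right:
  assumes m: "mono_on {0..} \<phi>" and t: "0 \<le> t"
  shows "(rpart \<phi> \<longlongrightarrow> rpart \<phi> t) (at_right t)"
proof (rule tendsto_sandwich[where f = "\<lambda>_. rpart \<phi> t" and h = "\<lambda>r. rpart \<phi> t + (\<phi> r - rlim \<phi> t)"])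
  show "eventually (\<lambda>r. rpart \<phi> t \<le> rpart \<phi> r) (at_right t)"
    by (rule eventually_at_right_interval[of t "t + 1"]) (use rpart_mono[OF m t] in auto)
  have "rpart \<phi> r \<le> rpart \<phi> t + (\<phi> r - rlim \<phi> t)" if "t < r" for r
  proof -
    have "{t..<r} = insert t {t<..<r}"
      using that by auto
    then have "(\<Sum>\<^sub>\<infinity>s\<in>{t..<r}. rlim \<phi> s - \<phi> s) = (rlim \<phi> t - \<phi> t) + (\<Sum>\<^sub>\<infinity>s\<in>{t<..<r}. rlim \<phi> s - \<phi> s)"
      by (simp, intro infsum_insert mono_on_jumps_summable_on[OF m]) (use t in auto)
    moreover have "0 \<le> (\<Sum>\<^sub>\<infinity>s\<in>{t<..<r}. rlim \<phi> s - \<phi> s)"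
      by (rule infsum_nonneg) (use mono_on_jump_nonneg[OF m] t in auto)
    ultimately show ?thesis
      using rpart_diff[OF m t, of r] that by simp
  qed
  then show "eventually (\<lambda>r. rpart \<phi> r \<le> rpart \<phi> t + (\<phi> r - rlim \<phi> t)) (at_right t)"
    using eventually_at_right_interval[of t "t + 1"] by auto
  have "((\<lambda>r. rpart \<phi> t + (\<phi> r - rlim \<phi> t)) \<longlongrightarrow> rpart \<phi> t + (rlim \<phi> t - rlim \<phi> t)) (at_right t)"
    by (intro tendsto_intros mono_on_tendsto_rlim[OF m t])
  then show "((\<lambda>r. rpart \<phi> t + (\<phi> r - rlim \<phi> t)) \<longlongrightarrow> rpart \<phi> t) (at_right t)"
    by simp
qed simp

lemma rpart_eq_self:
  assumes "\<And>s. 0 \<le> s \<Longrightarrow> rlim \<phi> s = \<phi> s" "\<phi> 0 = 0" "0 \<le> t"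
  shows "rpart \<phi> t = \<phi> t"
proof -
  have "(\<Sum>\<^sub>\<infinity>s\<in>{0..<t}. rlim \<phi> s - \<phi> s) = (\<Sum>\<^sub>\<infinity>s\<in>{0..<t}. 0)"
    by (rule infsum_cong) (use assms in auto)
  then show ?thesis
    unfolding rpart_eq using assms by simp
qed

lemma emeasure_LS_rpart_Ioc:
  assumes m: "mono_on {0..} \<phi>" and "a \<le> b"
  shows "emeasure (LS (rpart \<phi>)) {a<..b} = ennreal (rpart \<phi> (max 0 b) - rpart \<phi> (max 0 a))"
  unfolding LS_def
proof (rule emeasure_interval_measure_Ioc[OF \<open>a \<le> b\<close>])
  show "rpart \<phi> (max 0 x) \<le> rpart \<phi> (max 0 y)" if "x \<le> y" for x y
    by (rule rpart_mono[OF m]) (use that in auto)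
  show "continuous (at_right a) (\<lambda>t. rpart \<phi> (max 0 t))" for a
    unfolding continuous_within
  proof (cases "0 \<le> a")
    case True
    have "((\<lambda>t. rpart \<phi> (max 0 t)) \<longlongrightarrow> rpart \<phi> a) (at_right a)"
      by (rule tendsto_at_right_cong[OF rpart_tendsto_at_right[OF m True]]) (use True in auto)
    then show "((\<lambda>t. rpart \<phi> (max 0 t)) \<longlongrightarrow> rpart \<phi> (max 0 a)) (at_right a)"
      using True by simp
  next
    case False
    have "eventually (\<lambda>t. rpart \<phi> (max 0 t) = rpart \<phi> (max 0 a)) (at_right a)"
      by (rule eventually_at_right_interval[of a 0]) (use False in auto)
    then show "((\<lambda>t. rpart \<phi> (max 0 t)) \<longlongrightarrow> rpart \<phi> (max 0 a)) (at_right a)"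
      by (rule tendsto_eventually)
  qed
qed

lemma LS_null_where_integrand_ge:
  assumes int: "(\<integral>\<^sup>+ s\<in>{0..}. ennreal (g s) \<partial>LS F) = 0"
    and A: "A \<in> sets borel" "A \<subseteq> {0..}" and "0 < c" and g: "\<And>r. r \<in> A \<Longrightarrow> c \<le> g r"
  shows "emeasure (LS F) A = 0"
proof -
  have "ennreal c * emeasure (LS F) A = (\<integral>\<^sup>+ s. ennreal c * indicator A s \<partial>LS F)"
    by (rule nn_integral_cmult_indicator[symmetric]) (use A(1) in \<open>simp add: LS_def\<close>)
  also have "\<dots> \<le> (\<integral>\<^sup>+ s. ennreal (g s) * indicator {0..} s \<partial>LS F)"
    by (rule nn_integral_mono) (use A(2) g in \<open>auto simp: indicator_def intro!: ennreal_leI\<close>)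
  also have "\<dots> = 0"
    using int by simp
  finally show ?thesis
    using \<open>0 < c\<close> by simp
qed

lemma rpart_flat_where_integrand_ge:
  assumes m: "mono_on {0..} \<phi>"
    and int: "(\<integral>\<^sup>+ s\<in>{0..}. ennreal (g s) \<partial>LS (rpart \<phi>)) = 0"
    and ab: "0 \<le> a" "a \<le> b" and "0 < c" and g: "\<And>r. a < r \<Longrightarrow> r \<le> b \<Longrightarrow> c \<le> g r"
  shows "rpart \<phi> b = rpart \<phi> a"
proof -
  have "emeasure (LS (rpart \<phi>)) {a<..b} = 0"
    by (rule LS_null_where_integrand_ge[OF int _ _ \<open>0 < c\<close>]) (use ab g in auto)
  then have "rpart \<phi> b \<le> rpart \<phi> a"
    using emeasure_LS_rpart_Ioc[OF m ab(2)] ab by (simp add: ennreal_eq_0_iff)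
  then show ?thesis
    using rpart_mono[OF m ab] by simp
qed

lemma emeasure_LS_rpart_singleton_ge:
  assumes m: "mono_on {0..} \<phi>" and "0 < s"
    and ge: "\<And>r. 0 \<le> r \<Longrightarrow> r < s \<Longrightarrow> e \<le> rpart \<phi> s - rpart \<phi> r"
  shows "ennreal e \<le> emeasure (LS (rpart \<phi>)) {s}"
proof -
  let ?M = "LS (rpart \<phi>)"
  define A where "A n = {s - 1 / real (Suc n) <.. s}" for n
  have "(INF n. emeasure ?M (A n)) = emeasure ?M (\<Inter>n. A n)"
  proof (rule INF_emeasure_decseq)
    show "range A \<subseteq> sets ?M"
      by (auto simp: A_def LS_def)
    show "decseq A"
    proof (rule decseq_SucI)
      fix n
      have "1 / real (Suc (Suc n)) \<le> 1 / real (Suc n)"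
        by (rule divide_left_mono) auto
      then show "A (Suc n) \<subseteq> A n"
        unfolding A_def by auto
    qed
    show "emeasure ?M (A n) \<noteq> \<infinity>" for n
      unfolding A_def by (subst emeasure_LS_rpart_Ioc[OF m]) auto
  qed
  also have "(\<Inter>n. A n) = {s}"
  proof (intro equalityI subsetI)
    fix x assume x: "x \<in> (\<Inter>n. A n)"
    have "\<not> x < s"
    proof
      assume "x < s"
      then obtain n where "inverse (real (Suc n)) < s - x"
        using reals_Archimedean[of "s - x"] by auto
      moreover have "x \<in> A n"
        using x by blast
      ultimately show False
        by (simp add: A_def inverse_eq_divide)
    qed
    moreover have "x \<le> s"
      using x by (auto simp: A_def)
    ultimately show "x \<in> {s}"
      by simp
  qed (auto simp: A_def)
  moreover have "ennreal e \<le> emeasure ?M (A n)" for n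
  proof -
    let ?r = "max 0 (s - 1 / real (Suc n))"
    have "emeasure ?M (A n) = ennreal (rpart \<phi> s - rpart \<phi> ?r)"
      unfolding A_def using \<open>0 < s\<close> by (subst emeasure_LS_rpart_Ioc[OF m]) auto
    moreover have "e \<le> rpart \<phi> s - rpart \<phi> ?r"
      by (rule ge) (use \<open>0 < s\<close> in auto)
    ultimately show ?thesis
      by (simp add: ennreal_leI)
  qed
  then have "ennreal e \<le> (INF n. emeasure ?M (A n))"
    by (rule INF_greatest)
  ultimately show ?thesis
    by simp
qed

lemma rpart_left_continuous_where_integrand_pos:
  assumes m: "mono_on {0..} \<phi>"
    and int: "(\<integral>\<^sup>+ s\<in>{0..}. ennreal (g s) \<partial>LS (rpart \<phi>)) = 0"
    and "0 < s" "0 < g s" "0 < e"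
  shows "\<exists>r\<in>{0..<s}. rpart \<phi> s - rpart \<phi> r < e"
proof (rule ccontr)
  assume "\<not> ?thesis"
  then have "ennreal e \<le> emeasure (LS (rpart \<phi>)) {s}"
    by (intro emeasure_LS_rpart_singleton_ge[OF m \<open>0 < s\<close>]) force
  moreover have "emeasure (LS (rpart \<phi>)) {s} = 0"
    by (rule LS_null_where_integrand_ge[OF int _ _ \<open>0 < g s\<close>]) (use \<open>0 < s\<close> in auto)
  ultimately show False
    using \<open>0 < e\<close> by simp
qed

lemma mono_on_flat_where_integrand_ge:
  assumes m: "mono_on {0..} \<phi>"
    and int: "(\<integral>\<^sup>+ s\<in>{0..}. ennreal (g s) \<partial>LS (rpart \<phi>)) = 0"
    and ab: "0 \<le> a" "a \<le> b" and "0 < c" and g: "\<And>r. a \<le> r \<Longrightarrow> r \<le> b \<Longrightarrow> c \<le> g r"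
    and no_jump: "\<And>r. a \<le> r \<Longrightarrow> r < b \<Longrightarrow> rlim \<phi> r = \<phi> r"
  shows "\<phi> a = \<phi> b"
proof -
  have "rpart \<phi> b = rpart \<phi> a"
    by (rule rpart_flat_where_integrand_ge[OF m int ab \<open>0 < c\<close>]) (use g in auto)
  moreover have "(\<Sum>\<^sub>\<infinity>s\<in>{a..<b}. rlim \<phi> s - \<phi> s) = (\<Sum>\<^sub>\<infinity>s\<in>{a..<b}. 0)"
    by (rule infsum_cong) (use no_jump in auto)
  ultimately show ?thesis
    using rpart_diff[OF m ab] by simp
qed

lemma mono_on_left_continuous_where_integrand_pos:
  assumes m: "mono_on {0..} \<phi>"
    and int: "(\<integral>\<^sup>+ s\<in>{0..}. ennreal (g s) \<partial>LS (rpart \<phi>)) = 0"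
    and s: "0 < s" and "0 < g s" "0 < e"
  shows "\<exists>r\<in>{0..<s}. \<phi> s - \<phi> r < e"
proof -
  let ?S = "SUP x\<in>{0..<s}. \<phi> x"
  have bdd: "bdd_above (\<phi> ` {0..<s})"
    by (rule bdd_aboveI[of _ "\<phi> s"]) (use m s in \<open>auto simp: mono_on_def\<close>)
  obtain r0 where r0: "r0 \<in> {0..<s}" "?S - e/2 < \<phi> r0"
    using less_cSUP_iff[OF _ bdd, of "?S - e/2"] s \<open>0 < e\<close> by force
  obtain r1 where r1: "r1 \<in> {0..<s}" "rpart \<phi> s - rpart \<phi> r1 < e/2"
    using rpart_left_continuous_where_integrand_pos[OF m int s \<open>0 < g s\<close>, of "e/2"] \<open>0 < e\<close>
    by auto
  define r where "r = max r0 r1"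
  have r: "0 \<le> r" "r < s"
    using r0 r1 by (auto simp: r_def)
  have "\<phi> s - \<phi> r = (rpart \<phi> s - rpart \<phi> r) + (\<Sum>\<^sub>\<infinity>x\<in>{r..<s}. rlim \<phi> x - \<phi> x)"
    using rpart_diff[OF m r(1)] r by simp
  moreover have "rpart \<phi> r1 \<le> rpart \<phi> r"
    using rpart_mono[OF m, of r1 r] r1 by (auto simp: r_def)
  moreover have "(\<Sum>\<^sub>\<infinity>x\<in>{r..<s}. rlim \<phi> x - \<phi> x) \<le> ?S - \<phi> r"
    by (rule mono_on_jumps_infsum_le_Sup[OF m r])
  moreover have "\<phi> r0 \<le> \<phi> r"
    using m r0 r by (auto simp: mono_on_def r_def)
  ultimately have "\<phi> s - \<phi> r < e"
    using r0(2) r1(2) by linarith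
  then show ?thesis
    using r by auto
qed

section \<open>Regulated functions\<close>

lemma regulated_locally_bounded:
  assumes f: "regulated f" and s: "0 \<le> s"
  obtains d M where "0 < d" "\<And>r. 0 \<le> r \<Longrightarrow> \<bar>r - s\<bar> < d \<Longrightarrow> \<bar>f r\<bar> \<le> M"
proof -
  obtain b1 where b1: "s < b1" "\<And>r. s < r \<Longrightarrow> r < b1 \<Longrightarrow> \<bar>f r - rlim f s\<bar> < 1"
    using tendsto_at_right_realE[OF regulated_tendsto_rlim[OF f s], of 1] by auto
  obtain b2 L where b2: "b2 < s" "\<And>r. b2 < r \<Longrightarrow> r < s \<Longrightarrow> 0 \<le> r \<Longrightarrow> \<bar>f r - L\<bar> < 1"
  proof (cases "0 < s")
    case True
    then obtain L where "(f \<longlongrightarrow> L) (at_left s)"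
      using f unfolding regulated_def by blast
    then have "eventually (\<lambda>r. dist (f r) L < 1) (at_left s)"
      using tendsto_iff zero_less_one by blast
    then show thesis
      using that unfolding eventually_at_left_field dist_real_def by blast
  next
    case False
    then show thesis
      using that[of "s - 1" 0] s by auto
  qed
  show thesis
  proof (rule that[of "min (b1 - s) (s - b2)" "\<bar>f s\<bar> + \<bar>rlim f s\<bar> + \<bar>L\<bar> + 1"])
    show "0 < min (b1 - s) (s - b2)"
      using b1 b2 by auto
    fix r assume r: "0 \<le> r" "\<bar>r - s\<bar> < min (b1 - s) (s - b2)"
    consider "r = s" | "s < r" | "r < s"
      by linarith
    then show "\<bar>f r\<bar> \<le> \<bar>f s\<bar> + \<bar>rlim f s\<bar> + \<bar>L\<bar> + 1"
    proof cases
      case 2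
      then show ?thesis
        using b1(2)[of r] r by linarith
    next
      case 3
      then show ?thesis
        using b2(2)[of r] r by linarith
    qed auto
  qed
qed

lemma regulated_bounded:
  assumes f: "regulated f"
  obtains M where "\<And>s. s \<in> {0..T} \<Longrightarrow> \<bar>f s\<bar> \<le> M"
proof -
  have "\<exists>p. 0 \<le> s \<longrightarrow> 0 < fst p \<and> (\<forall>r. 0 \<le> r \<and> \<bar>r - s\<bar> < fst p \<longrightarrow> \<bar>f r\<bar> \<le> snd p)" for s
  proof (cases "0 \<le> s")
    case True
    obtain d M where "0 < d" "\<And>r. 0 \<le> r \<Longrightarrow> \<bar>r - s\<bar> < d \<Longrightarrow> \<bar>f r\<bar> \<le> M"
      using regulated_locally_bounded[OF f True] by blast
    then show ?thesis
      by (intro exI[of _ "(d, M)"]) auto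
  qed simp
  then obtain P where P: "\<And>s. 0 \<le> s \<Longrightarrow> 0 < fst (P s)"
    "\<And>s r. 0 \<le> s \<Longrightarrow> 0 \<le> r \<Longrightarrow> \<bar>r - s\<bar> < fst (P s) \<Longrightarrow> \<bar>f r\<bar> \<le> snd (P s)"
    using choice[of "\<lambda>s p. 0 \<le> s \<longrightarrow> 0 < fst p \<and> (\<forall>r. 0 \<le> r \<and> \<bar>r - s\<bar> < fst p \<longrightarrow> \<bar>f r\<bar> \<le> snd p)"]
    by blast
  have "compact {0..T}" "\<And>c. c \<in> {0..T} \<Longrightarrow> open (ball c (fst (P c)))"
    by simp_all
  moreover have "{0..T} \<subseteq> (\<Union>c\<in>{0..T}. ball c (fst (P c)))"
  proof
    fix s assume "s \<in> {0..T}"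
    then show "s \<in> (\<Union>c\<in>{0..T}. ball c (fst (P c)))"
      using P(1)[of s] by (intro UN_I[of s]) auto
  qed
  ultimately obtain C where C: "C \<subseteq> {0..T}" "finite C" "{0..T} \<subseteq> (\<Union>c\<in>C. ball c (fst (P c)))"
    by (rule compactE_image)
  show thesis
  proof (rule that)
    fix s assume s: "s \<in> {0..T}"
    then obtain c where c: "c \<in> C" "s \<in> ball c (fst (P c))"
      using C by blast
    then have "\<bar>f s\<bar> \<le> snd (P c)"
      using P(2)[of c s] C s by (auto simp: dist_real_def)
    also have "\<dots> \<le> (\<Sum>c\<in>C. \<bar>snd (P c)\<bar>)"
      using member_le_sum[of c C "\<lambda>c. \<bar>snd (P c)\<bar>"] c C by auto
    finally show "\<bar>f s\<bar> \<le> (\<Sum>c\<in>C. \<bar>snd (P c)\<bar>)" .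
  qed
qed

lemma regulated_rlim_bounded:
  assumes f: "regulated f"
  obtains M where "\<And>s. s \<in> {0..T} \<Longrightarrow> \<bar>f s\<bar> \<le> M \<and> \<bar>rlim f s\<bar> \<le> M"
proof -
  obtain M where M: "\<And>s. s \<in> {0..T + 1} \<Longrightarrow> \<bar>f s\<bar> \<le> M"
    using regulated_bounded[OF f] by blast
  have rlim_bound: "\<bar>rlim f s\<bar> \<le> M" if s: "s \<in> {0..T}" for s
  proof -
    have near: "f r \<le> M" "- M \<le> f r" if "s < r" "r < s + 1" for r
      using M[of r] s that by auto
    have "rlim f s \<le> M"
      by (rule tendsto_at_right_upperbound[OF regulated_tendsto_rlim[OF f], of s "s + 1"])
        (use s near in auto)
    moreover have "- M \<le> rlim f s"
      by (rule tendsto_at_right_lowerbound[OF regulated_tendsto_rlim[OF f], of s "s + 1"])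
        (use s near in auto)
    ultimately show ?thesis
      by simp
  qed
  show thesis
  proof (rule that)
    fix s assume s: "s \<in> {0..T}"
    then have "s \<in> {0..T + 1}"
      by simp
    then show "\<bar>f s\<bar> \<le> M \<and> \<bar>rlim f s\<bar> \<le> M"
      using M rlim_bound[OF s] by blast
  qed
qed

lemma regulated_diff_bounded:
  assumes "regulated f" "regulated g"
  obtains M where "\<And>s. s \<in> {0..T} \<Longrightarrow> f s - g s \<le> M"
    "\<And>s. s \<in> {0..T} \<Longrightarrow> rlim f s - rlim g s \<le> M"
proof -
  obtain Mf where Mf: "\<And>s. s \<in> {0..T} \<Longrightarrow> \<bar>f s\<bar> \<le> Mf \<and> \<bar>rlim f s\<bar> \<le> Mf"
    using regulated_rlim_bounded[OF assms(1)] by blast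
  obtain Mg where Mg: "\<And>s. s \<in> {0..T} \<Longrightarrow> \<bar>g s\<bar> \<le> Mg \<and> \<bar>rlim g s\<bar> \<le> Mg"
    using regulated_rlim_bounded[OF assms(2)] by blast
  show thesis
  proof (rule that[of "Mf + Mg"])
    fix s assume s: "s \<in> {0..T}"
    show "f s - g s \<le> Mf + Mg" "rlim f s - rlim g s \<le> Mf + Mg"
      using Mf[OF s] Mg[OF s] by (auto simp: abs_le_iff)
  qed
qed

text \<open>The bound \<open>M\<close> provides summability, without which \<open>infsum\<close> is just \<open>0\<close>.\<close>

lemma weighted_jump_eq_0:
  assumes m: "mono_on {0..} \<phi>" and s: "s \<in> {0..t}"
    and a: "\<And>r. r \<in> {0..t} \<Longrightarrow> 0 \<le> a r" "\<And>r. r \<in> {0..t} \<Longrightarrow> a r \<le> M"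
    and sum: "(\<Sum>\<^sub>\<infinity>r\<in>{0..t}. a r * (rlim \<phi> r - \<phi> r)) = 0"
  shows "a s = 0 \<or> rlim \<phi> s = \<phi> s"
proof -
  have nonneg: "0 \<le> a r * (rlim \<phi> r - \<phi> r)" if "r \<in> {0..t}" for r
    using a(1)[OF that] mono_on_jump_nonneg[OF m, of r] that by simp
  have "(\<lambda>r. M * (rlim \<phi> r - \<phi> r)) summable_on {0..t}"
    by (intro summable_on_cmult_right mono_on_jumps_summable_on[OF m, of _ "t + 1"]) auto
  then have summable: "(\<lambda>r. a r * (rlim \<phi> r - \<phi> r)) summable_on {0..t}"
    by (rule summable_on_comparison_test)
      (use a nonneg mono_on_jump_nonneg[OF m] in \<open>auto intro: mult_right_mono\<close>)
  have "(\<Sum>\<^sub>\<infinity>r\<in>{0..t}. a r * (rlim \<phi> r - \<phi> r)) \<le> 0"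
    using sum by simp
  from nonneg_infsum_le_0D[OF this summable nonneg s] show ?thesis
    by simp
qed

section \<open>A one-barrier and a two-barrier solution driven by the same input\<close>

definition gap :: "(real \<Rightarrow> real) \<Rightarrow> (real \<Rightarrow> real) \<Rightarrow> real \<Rightarrow> real" where
  "gap f g r = min (f r - g r) (rlim f r - rlim g r)"

locale barrier_solutions =
  fixes l u y \<xi> \<kappa> x \<phi>1 \<phi>2 :: "real \<Rightarrow> real"
  assumes regulated_l: "regulated l" and regulated_u: "regulated u"
    and regulated_y: "regulated y" and regulated_x: "regulated x"
    and one_barrier: "RP1 l y \<xi> \<kappa>"
    and x_eq: "\<And>t. 0 \<le> t \<Longrightarrow> x t = y t + \<phi>1 t - \<phi>2 t"
    and l_le_x: "\<And>t. 0 \<le> t \<Longrightarrow> l t \<le> x t" and x_le_u: "\<And>t. 0 \<le> t \<Longrightarrow> x t \<le> u t"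
    and mono_\<phi>1: "mono_on {0..} \<phi>1" and mono_\<phi>2: "mono_on {0..} \<phi>2"
    and \<phi>1_0: "\<phi>1 0 = 0" and \<phi>2_0: "\<phi>2 0 = 0"
    and \<phi>1_support: "(\<integral>\<^sup>+ s\<in>{0..}. ennreal (gap x l s) \<partial>LS (rpart \<phi>1)) = 0"
    and \<phi>2_support: "(\<integral>\<^sup>+ s\<in>{0..}. ennreal (gap u x s) \<partial>LS (rpart \<phi>2)) = 0"
    and \<phi>1_jumps: "\<And>t. 0 \<le> t \<Longrightarrow> (\<Sum>\<^sub>\<infinity>s\<in>{0..t}. (rlim x s - rlim l s) * (rlim \<phi>1 s - \<phi>1 s)) = 0"
      "\<And>t. 0 \<le> t \<Longrightarrow> (\<Sum>\<^sub>\<infinity>s\<in>{0..t}. (u s - x s) * (rlim \<phi>1 s - \<phi>1 s)) = 0"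
    and \<phi>2_jumps: "\<And>t. 0 \<le> t \<Longrightarrow> (\<Sum>\<^sub>\<infinity>s\<in>{0..t}. (rlim u s - rlim x s) * (rlim \<phi>2 s - \<phi>2 s)) = 0"
      "\<And>t. 0 \<le> t \<Longrightarrow> (\<Sum>\<^sub>\<infinity>s\<in>{0..t}. (x s - l s) * (rlim \<phi>2 s - \<phi>2 s)) = 0"
begin

lemma
  shows xi_eq: "0 \<le> t \<Longrightarrow> \<xi> t = y t + \<kappa> t"
    and l_le_xi: "0 \<le> t \<Longrightarrow> l t \<le> \<xi> t"
    and mono_\<kappa>: "mono_on {0..} \<kappa>"
    and \<kappa>_tendsto: "0 \<le> t \<Longrightarrow> (\<kappa> \<longlongrightarrow> \<kappa> t) (at_right t)"
    and \<kappa>_0: "\<kappa> 0 = 0"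
  using one_barrier unfolding RP1_def by auto

lemma rlim_\<kappa>: "0 \<le> t \<Longrightarrow> rlim \<kappa> t = \<kappa> t"
  using rlim_eqI \<kappa>_tendsto by blast

lemma \<kappa>_support: "(\<integral>\<^sup>+ s\<in>{0..}. ennreal (gap \<xi> l s) \<partial>LS (rpart \<kappa>)) = 0"
proof -
  have "(\<lambda>t. rpart \<kappa> (max 0 t)) = (\<lambda>t. \<kappa> (max 0 t))"
    using rpart_eq_self[of \<kappa>] rlim_\<kappa> \<kappa>_0 by auto
  then have "LS (rpart \<kappa>) = LS \<kappa>"
    by (simp add: LS_def)
  then show ?thesis
    using one_barrier unfolding RP1_def gap_def by simp
qed

lemma tendsto_rlim_l: "0 \<le> t \<Longrightarrow> (l \<longlongrightarrow> rlim l t) (at_right t)"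
  and tendsto_rlim_u: "0 \<le> t \<Longrightarrow> (u \<longlongrightarrow> rlim u t) (at_right t)"
  and tendsto_rlim_x: "0 \<le> t \<Longrightarrow> (x \<longlongrightarrow> rlim x t) (at_right t)"
  using regulated_tendsto_rlim regulated_l regulated_u regulated_x by blast+

lemma rlim_xi:
  assumes "0 \<le> t"
  shows "rlim \<xi> t = rlim y t + \<kappa> t" and tendsto_rlim_xi: "(\<xi> \<longlongrightarrow> rlim \<xi> t) (at_right t)"
proof -
  have "((\<lambda>r. y r + \<kappa> r) \<longlongrightarrow> rlim y t + \<kappa> t) (at_right t)"
    by (intro tendsto_add regulated_tendsto_rlim[OF regulated_y] \<kappa>_tendsto assms)
  then have "(\<xi> \<longlongrightarrow> rlim y t + \<kappa> t) (at_right t)"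
    by (rule tendsto_at_right_cong) (use assms xi_eq in auto)
  then show "rlim \<xi> t = rlim y t + \<kappa> t" "(\<xi> \<longlongrightarrow> rlim \<xi> t) (at_right t)"
    using rlim_eqI by auto
qed

lemma rlim_x: "0 \<le> t \<Longrightarrow> rlim x t = rlim y t + rlim \<phi>1 t - rlim \<phi>2 t"
proof -
  assume t: "0 \<le> t"
  have "((\<lambda>r. y r + \<phi>1 r - \<phi>2 r) \<longlongrightarrow> rlim y t + rlim \<phi>1 t - rlim \<phi>2 t) (at_right t)"
    by (intro tendsto_add tendsto_diff regulated_tendsto_rlim[OF regulated_y]
        mono_on_tendsto_rlim[OF mono_\<phi>1] mono_on_tendsto_rlim[OF mono_\<phi>2] t)
  then have "(x \<longlongrightarrow> rlim y t + rlim \<phi>1 t - rlim \<phi>2 t) (at_right t)"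
    by (rule tendsto_at_right_cong) (use t x_eq in auto)
  then show ?thesis
    by (rule rlim_eqI)
qed

lemma rlim_l_le_rlim_x: "0 \<le> t \<Longrightarrow> rlim l t \<le> rlim x t"
  by (rule tendsto_at_right_le[OF tendsto_rlim_l tendsto_rlim_x]) (use l_le_x in auto)

lemma rlim_x_le_rlim_u: "0 \<le> t \<Longrightarrow> rlim x t \<le> rlim u t"
  by (rule tendsto_at_right_le[OF tendsto_rlim_x tendsto_rlim_u]) (use x_le_u in auto)

lemma rlim_l_le_rlim_xi: "0 \<le> t \<Longrightarrow> rlim l t \<le> rlim \<xi> t"
  by (rule tendsto_at_right_le[OF tendsto_rlim_l tendsto_rlim_xi]) (use l_le_xi in auto)

lemma gap_xi_l_nonneg: "0 \<le> t \<Longrightarrow> 0 \<le> gap \<xi> l t"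
  using l_le_xi rlim_l_le_rlim_xi by (simp add: gap_def)

lemma \<phi>1_jump_at:
  assumes "0 \<le> t" "\<phi>1 t < rlim \<phi>1 t"
  shows "rlim x t = rlim l t" "x t = u t"
proof -
  obtain M where M: "\<And>s. s \<in> {0..t} \<Longrightarrow> x s - l s \<le> M" "\<And>s. s \<in> {0..t} \<Longrightarrow> rlim x s - rlim l s \<le> M"
    using regulated_diff_bounded[OF regulated_x regulated_l] by blast
  obtain N where N: "\<And>s. s \<in> {0..t} \<Longrightarrow> u s - x s \<le> N"
    using regulated_diff_bounded[OF regulated_u regulated_x] by blast
  have "rlim x t - rlim l t = 0 \<or> rlim \<phi>1 t = \<phi>1 t"
    by (rule weighted_jump_eq_0[OF mono_\<phi>1 _ _ M(2) \<phi>1_jumps(1)[OF assms(1)]])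
      (use assms rlim_l_le_rlim_x in auto)
  then show "rlim x t = rlim l t"
    using assms by simp
  have "u t - x t = 0 \<or> rlim \<phi>1 t = \<phi>1 t"
    by (rule weighted_jump_eq_0[OF mono_\<phi>1 _ _ N \<phi>1_jumps(2)[OF assms(1)]])
      (use assms x_le_u in auto)
  then show "x t = u t"
    using assms by simp
qed

lemma \<phi>2_jump_at:
  assumes "0 \<le> t" "\<phi>2 t < rlim \<phi>2 t"
  shows "rlim x t = rlim u t" "x t = l t"
proof -
  obtain M where M: "\<And>s. s \<in> {0..t} \<Longrightarrow> u s - x s \<le> M" "\<And>s. s \<in> {0..t} \<Longrightarrow> rlim u s - rlim x s \<le> M"
    using regulated_diff_bounded[OF regulated_u regulated_x] by blast
  obtain N where N: "\<And>s. s \<in> {0..t} \<Longrightarrow> x s - l s \<le> N"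
    using regulated_diff_bounded[OF regulated_x regulated_l] by blast
  have "rlim u t - rlim x t = 0 \<or> rlim \<phi>2 t = \<phi>2 t"
    by (rule weighted_jump_eq_0[OF mono_\<phi>2 _ _ M(2) \<phi>2_jumps(1)[OF assms(1)]])
      (use assms rlim_x_le_rlim_u in auto)
  then show "rlim x t = rlim u t"
    using assms by simp
  have "x t - l t = 0 \<or> rlim \<phi>2 t = \<phi>2 t"
    by (rule weighted_jump_eq_0[OF mono_\<phi>2 _ _ N \<phi>2_jumps(2)[OF assms(1)]])
      (use assms l_le_x in auto)
  then show "x t = l t"
    using assms by simp
qed

lemma \<phi>1_flat:
  assumes "0 \<le> a" "a \<le> b" "0 < c" "\<And>r. a \<le> r \<Longrightarrow> r \<le> b \<Longrightarrow> c \<le> gap x l r"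
  shows "\<phi>1 a = \<phi>1 b"
proof (rule mono_on_flat_where_integrand_ge[OF mono_\<phi>1 \<phi>1_support assms])
  fix r assume r: "a \<le> r" "r < b"
  show "rlim \<phi>1 r = \<phi>1 r"
  proof (rule ccontr)
    assume "rlim \<phi>1 r \<noteq> \<phi>1 r"
    moreover have "0 \<le> r"
      using r assms(1) by simp
    ultimately have "\<phi>1 r < rlim \<phi>1 r"
      using mono_on_le_rlim[OF mono_\<phi>1] by (simp add: order.strict_iff_order)
    then have "rlim x r = rlim l r"
      using \<phi>1_jump_at(1) \<open>0 \<le> r\<close> by blast
    moreover have "c \<le> gap x l r"
      using assms(4) r by simp
    ultimately show False
      using assms(3) by (simp add: gap_def)
  qed
qed

lemma \<phi>2_flat:
  assumes "0 \<le> a" "a \<le> b" "0 < c" "\<And>r. a \<le> r \<Longrightarrow> r \<le> b \<Longrightarrow> c \<le> gap u x r"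
  shows "\<phi>2 a = \<phi>2 b"
proof (rule mono_on_flat_where_integrand_ge[OF mono_\<phi>2 \<phi>2_support assms])
  fix r assume r: "a \<le> r" "r < b"
  show "rlim \<phi>2 r = \<phi>2 r"
  proof (rule ccontr)
    assume "rlim \<phi>2 r \<noteq> \<phi>2 r"
    moreover have "0 \<le> r"
      using r assms(1) by simp
    ultimately have "\<phi>2 r < rlim \<phi>2 r"
      using mono_on_le_rlim[OF mono_\<phi>2] by (simp add: order.strict_iff_order)
    then have "rlim x r = rlim u r"
      using \<phi>2_jump_at(1) \<open>0 \<le> r\<close> by blast
    moreover have "c \<le> gap u x r"
      using assms(4) r by simp
    ultimately show False
      using assms(3) by (simp add: gap_def)
  qed
qed

lemma \<kappa>_flat:
  assumes "0 \<le> a" "a \<le> b" "0 < c" "\<And>r. a \<le> r \<Longrightarrow> r \<le> b \<Longrightarrow> c \<le> gap \<xi> l r"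
  shows "\<kappa> a = \<kappa> b"
  by (rule mono_on_flat_where_integrand_ge[OF mono_\<kappa> \<kappa>_support assms])
    (use rlim_\<kappa> assms(1) in auto)

lemma \<phi>1_left_continuous: "0 < s \<Longrightarrow> 0 < gap x l s \<Longrightarrow> 0 < e \<Longrightarrow> \<exists>r\<in>{0..<s}. \<phi>1 s - \<phi>1 r < e"
  by (rule mono_on_left_continuous_where_integrand_pos[OF mono_\<phi>1 \<phi>1_support])

lemma \<phi>2_left_continuous: "0 < s \<Longrightarrow> 0 < gap u x s \<Longrightarrow> 0 < e \<Longrightarrow> \<exists>r\<in>{0..<s}. \<phi>2 s - \<phi>2 r < e"
  by (rule mono_on_left_continuous_where_integrand_pos[OF mono_\<phi>2 \<phi>2_support])

lemma \<kappa>_left_continuous: "0 < s \<Longrightarrow> 0 < gap \<xi> l s \<Longrightarrow> 0 < e \<Longrightarrow> \<exists>r\<in>{0..<s}. \<kappa> s - \<kappa> r < e"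
  by (rule mono_on_left_continuous_where_integrand_pos[OF mono_\<kappa> \<kappa>_support])

definition \<eta> :: "real \<Rightarrow> real" where
  "\<eta> t = \<xi> t - x t"

lemma \<eta>_eq: "0 \<le> t \<Longrightarrow> \<eta> t = \<kappa> t - \<phi>1 t + \<phi>2 t"
  unfolding \<eta>_def using xi_eq x_eq by simp

lemma \<eta>_0: "\<eta> 0 = 0"
  using \<eta>_eq[of 0] \<kappa>_0 \<phi>1_0 \<phi>2_0 by simp

lemma rlim_\<eta>:
  assumes "0 \<le> t"
  shows "rlim \<eta> t = rlim \<xi> t - rlim x t" and tendsto_rlim_\<eta>: "(\<eta> \<longlongrightarrow> rlim \<eta> t) (at_right t)"
proof -
  have "(\<eta> \<longlongrightarrow> rlim \<xi> t - rlim x t) (at_right t)"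
    unfolding \<eta>_def[abs_def] by (intro tendsto_diff tendsto_rlim_xi tendsto_rlim_x assms)
  then show "rlim \<eta> t = rlim \<xi> t - rlim x t" "(\<eta> \<longlongrightarrow> rlim \<eta> t) (at_right t)"
    using rlim_eqI by auto
qed

lemma \<eta>_jump: "0 \<le> t \<Longrightarrow> rlim \<eta> t - \<eta> t = (rlim \<phi>2 t - \<phi>2 t) - (rlim \<phi>1 t - \<phi>1 t)"
  using \<eta>_eq rlim_\<eta> rlim_xi rlim_x by simp

lemma \<eta>_diff:
  "0 \<le> a \<Longrightarrow> a \<le> b \<Longrightarrow> \<eta> b - \<eta> a = (\<kappa> b - \<kappa> a) - (\<phi>1 b - \<phi>1 a) + (\<phi>2 b - \<phi>2 a)"
  using \<eta>_eq[of a] \<eta>_eq[of b] by simp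

lemma \<eta>_jump_down: "0 \<le> t \<Longrightarrow> rlim \<eta> t < \<eta> t \<Longrightarrow> x t = u t"
  using \<eta>_jump[of t] mono_on_jump_nonneg[OF mono_\<phi>2, of t] \<phi>1_jump_at(2)[of t] by force

lemma \<eta>_jump_up: "0 \<le> t \<Longrightarrow> \<eta> t < rlim \<eta> t \<Longrightarrow> x t = l t \<and> rlim x t = rlim u t"
  using \<eta>_jump[of t] mono_on_jump_nonneg[OF mono_\<phi>1, of t] \<phi>2_jump_at[of t] by force

lemma min_\<eta>_lt_if_near_lower:
  assumes "0 \<le> p" "gap \<xi> l p < d"
  shows "min (\<eta> p) (rlim \<eta> p) < d"
  using assms l_le_x[of p] rlim_l_le_rlim_x[of p] by (auto simp: gap_def \<eta>_def rlim_\<eta>)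

lemma near_lower_barrier_if_\<eta>_decreases:
  assumes "0 \<le> a" "a \<le> b" "\<eta> b < \<eta> a" "0 < d"
  shows "\<exists>p\<in>{a..b}. gap x l p < d"
proof (rule ccontr)
  assume "\<not> ?thesis"
  then have "\<phi>1 a = \<phi>1 b"
    using \<phi>1_flat[OF assms(1,2,4)] by force
  moreover have "\<kappa> a \<le> \<kappa> b" "\<phi>2 a \<le> \<phi>2 b"
    using mono_\<kappa> mono_\<phi>2 assms(1,2) by (auto simp: mono_on_def)
  ultimately show False
    using \<eta>_diff[OF assms(1,2)] assms(3) by simp
qed

lemma near_barrier_if_\<eta>_increases:
  assumes "0 \<le> a" "a \<le> b" "\<eta> a < \<eta> b" "0 < d"
  shows "\<exists>p\<in>{a..b}. gap \<xi> l p < d \<or> gap u x p < d"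
proof (rule ccontr)
  assume "\<not> ?thesis"
  then have "\<kappa> a = \<kappa> b" "\<phi>2 a = \<phi>2 b"
    using \<kappa>_flat[OF assms(1,2,4)] \<phi>2_flat[OF assms(1,2,4)] by force+
  moreover have "\<phi>1 a \<le> \<phi>1 b"
    using mono_\<phi>1 assms(1,2) by (auto simp: mono_on_def)
  ultimately show False
    using \<eta>_diff[OF assms(1,2)] assms(3) by simp
qed

lemma \<eta>_no_drop_from_left:
  assumes "0 < s" "0 < gap x l s" "0 < e"
  shows "\<exists>r\<in>{0..<s}. \<forall>p\<in>{r..s}. \<eta> p < \<eta> s + e"
proof -
  obtain r where r: "r \<in> {0..<s}" "\<phi>1 s - \<phi>1 r < e"
    using \<phi>1_left_continuous[OF assms] by blast
  have "\<eta> p < \<eta> s + e" if "p \<in> {r..s}" for p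
  proof -
    have "\<kappa> p \<le> \<kappa> s" "\<phi>2 p \<le> \<phi>2 s" "\<phi>1 r \<le> \<phi>1 p"
      using mono_\<kappa> mono_\<phi>2 mono_\<phi>1 r that by (auto simp: mono_on_def)
    then show ?thesis
      using \<eta>_diff[of p s] r that by auto
  qed
  then show ?thesis
    using r by blast
qed

lemma \<eta>_no_rise_from_left:
  assumes "0 < s" "0 < gap \<xi> l s" "0 < gap u x s" "0 < e"
  shows "\<exists>r\<in>{0..<s}. \<forall>p\<in>{r..s}. \<eta> s - e < \<eta> p"
proof -
  obtain r1 where r1: "r1 \<in> {0..<s}" "\<kappa> s - \<kappa> r1 < e/2"
    using \<kappa>_left_continuous[OF assms(1,2), of "e/2"] assms(4) by auto
  obtain r2 where r2: "r2 \<in> {0..<s}" "\<phi>2 s - \<phi>2 r2 < e/2"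
    using \<phi>2_left_continuous[OF assms(1,3), of "e/2"] assms(4) by auto
  have "\<eta> s - e < \<eta> p" if "p \<in> {max r1 r2..s}" for p
  proof -
    have "\<kappa> r1 \<le> \<kappa> p" "\<phi>2 r2 \<le> \<phi>2 p" "\<phi>1 p \<le> \<phi>1 s"
      using mono_\<kappa> mono_\<phi>2 mono_\<phi>1 r1 r2 that by (auto simp: mono_on_def)
    then show ?thesis
      using \<eta>_diff[of p s] r1 r2 that by auto
  qed
  then show ?thesis
    using r1 r2 by (intro bexI[of _ "max r1 r2"]) auto
qed

definition upper_excess :: "real \<Rightarrow> real" where
  "upper_excess s = max 0 (max (\<xi> s - u s) (rlim \<xi> s - rlim u s))"

definition lower_room :: "real \<Rightarrow> real" where
  "lower_room r = max (gap \<xi> l r) (\<xi> r - u r)"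

lemma Theta_eq: "Theta u l \<xi> t = (SUP s\<in>{0..t}. min (upper_excess s) (INF r\<in>{s..t}. lower_room r))"
  by (simp only: Theta_def upper_excess_def lower_room_def gap_def)

lemma lower_room_nonneg: "0 \<le> r \<Longrightarrow> 0 \<le> lower_room r"
  using gap_xi_l_nonneg[of r] unfolding lower_room_def by linarith

lemma lower_room_bdd_below: "0 \<le> s \<Longrightarrow> bdd_below (lower_room ` {s..t})"
proof (rule bdd_belowI[of _ 0])
  fix z assume "0 \<le> s" "z \<in> lower_room ` {s..t}"
  then show "0 \<le> z"
    using lower_room_nonneg by force
qed

lemma \<eta>_le_lower_room:
  assumes "0 \<le> r"
  shows "\<eta> r \<le> lower_room r"
proof (cases "rlim \<eta> r < \<eta> r")
  case True
  then have "x r = u r"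
    using \<eta>_jump_down assms by blast
  then show ?thesis
    by (simp add: lower_room_def \<eta>_def)
next
  case False
  then have "\<eta> r \<le> rlim \<xi> r - rlim l r"
    using rlim_l_le_rlim_x[OF assms] by (simp add: rlim_\<eta>[OF assms])
  moreover have "\<eta> r \<le> \<xi> r - l r"
    using l_le_x[OF assms] by (simp add: \<eta>_def)
  ultimately show ?thesis
    by (simp add: lower_room_def gap_def)
qed

lemma \<eta>_le_upper_excess:
  assumes "0 \<le> s" "x s = u s \<or> rlim x s = rlim u s \<or> rlim \<eta> s < \<eta> s"
  shows "\<eta> s \<le> upper_excess s"
proof (cases "rlim \<eta> s < \<eta> s")
  case True
  then show ?thesis
    using \<eta>_jump_down[OF assms(1) True] by (simp add: upper_excess_def \<eta>_def)
next
  case False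
  then show ?thesis
    using assms by (auto simp: upper_excess_def \<eta>_def rlim_\<eta>)
qed

lemma upper_excess_gt_if_near_upper:
  assumes "0 \<le> p" "gap u x p < d"
  shows "min (\<eta> p) (rlim \<eta> p) - d < upper_excess p"
proof -
  have "\<eta> p - d < \<xi> p - u p \<or> rlim \<eta> p - d < rlim \<xi> p - rlim u p"
    using assms(2) by (auto simp: gap_def \<eta>_def rlim_\<eta>[OF assms(1)] min_less_iff_disj)
  moreover have "\<xi> p - u p \<le> upper_excess p" "rlim \<xi> p - rlim u p \<le> upper_excess p"
    by (simp_all add: upper_excess_def)
  moreover have "min (\<eta> p) (rlim \<eta> p) \<le> \<eta> p" "min (\<eta> p) (rlim \<eta> p) \<le> rlim \<eta> p"
    by simp_all
  ultimately show ?thesis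
    by linarith
qed

subsection \<open>\<open>\<Theta>(\<xi>) \<le> \<eta>\<close>\<close>

lemma \<eta>_descent_near_lower_barrier:
  assumes "0 \<le> \<rho>" "\<rho> < b" "rlim \<eta> \<rho> = \<eta> \<rho>" "0 < d"
    and below: "\<And>b'. \<rho> < b' \<Longrightarrow> \<exists>e\<in>{\<rho><..<b'}. \<eta> e < \<eta> \<rho>"
  shows "\<exists>p\<in>{\<rho>..<b}. gap x l p < d \<and> max (\<eta> p) (rlim \<eta> p) < \<eta> \<rho> + d"
proof -
  obtain b0 where b0: "\<rho> < b0" "\<And>r. \<rho> < r \<Longrightarrow> r < b0 \<Longrightarrow> \<bar>\<eta> r - \<eta> \<rho>\<bar> < d/2"
    using tendsto_at_right_realE[OF tendsto_rlim_\<eta>[OF assms(1)], of "d/2"] assms(3,4) by auto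
  obtain e where e: "\<rho> < e" "e < min b b0" "\<eta> e < \<eta> \<rho>"
    using below[of "min b b0"] b0(1) assms(2) by auto
  obtain p where p: "p \<in> {\<rho>..e}" "gap x l p < d"
    using near_lower_barrier_if_\<eta>_decreases[OF assms(1) _ e(3) assms(4)] e(1) by auto
  have "\<eta> p < \<eta> \<rho> + d \<and> rlim \<eta> p < \<eta> \<rho> + d"
  proof (cases "p = \<rho>")
    case True
    then show ?thesis
      using assms(3,4) by simp
  next
    case False
    then have p': "\<rho> < p" "p < b0"
      using p e by auto
    have "rlim \<eta> p \<le> \<eta> \<rho> + d/2"
    proof (rule tendsto_at_right_upperbound[OF tendsto_rlim_\<eta> p'(2)])
      show "0 \<le> p"
        using p' assms(1) by simp
      show "\<eta> r \<le> \<eta> \<rho> + d/2" if "p < r" "r < b0" for r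
      proof -
        have "\<rho> < r"
          using p' that by simp
        from b0(2)[OF this that(2)] show ?thesis
          unfolding abs_less_iff by linarith
      qed
    qed
    moreover have "\<eta> p < \<eta> \<rho> + d"
      using b0(2)[OF p'] assms(4) unfolding abs_less_iff by linarith
    ultimately show ?thesis
      using assms(4) by (intro conjI) linarith+
  qed
  then show ?thesis
    using p e by (intro bexI[of _ p]) auto
qed

lemma gap_x_l_nonpos_at_drop:
  assumes "0 \<le> s" "s < \<rho>" "\<eta> \<rho> < c" "\<And>r. s \<le> r \<Longrightarrow> r < \<rho> \<Longrightarrow> c \<le> \<eta> r"
  shows "gap x l \<rho> \<le> 0"
proof (rule ccontr)
  assume "\<not> gap x l \<rho> \<le> 0"
  then obtain r where r: "r \<in> {0..<\<rho>}" "\<forall>p\<in>{r..\<rho>}. \<eta> p < \<eta> \<rho> + (c - \<eta> \<rho>)"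
    using \<eta>_no_drop_from_left[of \<rho> "c - \<eta> \<rho>"] assms(1-3) by auto
  have "max r s \<in> {r..\<rho>}"
    using r(1) assms(2) by auto
  then have "\<eta> (max r s) < c"
    using r(2) by fastforce
  then show False
    using assms(4)[of "max r s"] r(1) assms(2) by auto
qed

lemma \<eta>_ge_if_ge_near_lower_barrier:
  assumes st: "0 \<le> s" "s \<le> t"
    and start: "c \<le> max (\<eta> s) (rlim \<eta> s)"
    and near: "\<And>r d. s \<le> r \<Longrightarrow> r \<le> t \<Longrightarrow> 0 < d \<Longrightarrow> gap x l r < d \<Longrightarrow> c - d \<le> max (\<eta> r) (rlim \<eta> r)"
    and at_l: "\<And>r. s \<le> r \<Longrightarrow> r \<le> t \<Longrightarrow> x r = l r \<Longrightarrow> c \<le> \<eta> r"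
    and at_l_right: "\<And>r. s \<le> r \<Longrightarrow> r < t \<Longrightarrow> rlim x r = rlim l r \<Longrightarrow> c \<le> rlim \<eta> r"
  shows "c \<le> \<eta> t"
proof (rule ccontr)
  assume "\<not> c \<le> \<eta> t"
  define c' where "c' = (\<eta> t + c) / 2"
  have c': "\<eta> t < c'" "c' < c"
    using \<open>\<not> c \<le> \<eta> t\<close> by (auto simp: c'_def)
  define E where "E = {r\<in>{s..t}. \<eta> r < c'}"
  have "t \<in> E" "E \<subseteq> {s..t}"
    using st c' by (auto simp: E_def)
  then obtain \<rho> where \<rho>: "s \<le> \<rho>" "\<rho> \<le> t" and not_E: "\<And>r. r < \<rho> \<Longrightarrow> r \<notin> E"
    and E_accumulates: "\<And>b. \<rho> \<notin> E \<Longrightarrow> \<rho> < b \<Longrightarrow> \<exists>e\<in>{\<rho><..<b}. e \<in> E"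
    using first_passage by blast
  have "0 \<le> \<rho>"
    using st \<rho> by simp
  have before: "c' \<le> \<eta> r" if "s \<le> r" "r < \<rho>" for r
    using not_E[OF that(2)] that \<rho>(2) by (auto simp: E_def)
  have after: "\<exists>e\<in>{\<rho><..<b}. \<eta> e < c'" if "\<not> \<eta> \<rho> < c'" "\<rho> < b" for b
    using E_accumulates[OF _ that(2)] that(1) by (auto simp: E_def)
  show False
  proof (cases "\<eta> \<rho> < c'")
    case True
    have no_rise: "rlim \<eta> \<rho> \<le> \<eta> \<rho>"
      using \<eta>_jump_up[OF \<open>0 \<le> \<rho>\<close>] at_l[OF \<rho>] True c' by force
    then have "s < \<rho>"
      using start True c' \<rho>(1) by (cases "s = \<rho>") auto
    then have "gap x l \<rho> \<le> 0"
      using gap_x_l_nonpos_at_drop[OF st(1) _ True before] by simp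
    then have "c - (c - c') \<le> max (\<eta> \<rho>) (rlim \<eta> \<rho>)"
      using near[of \<rho> "c - c'"] \<rho> c' by auto
    then show False
      using True no_rise by auto
  next
    case False
    then have "c' \<le> \<eta> \<rho>" "\<rho> < t"
      using \<rho>(2) c' by (auto simp: le_less)
    have "rlim \<eta> \<rho> \<le> c'"
      using tendsto_at_right_le_if_frequently[OF tendsto_rlim_\<eta>[OF \<open>0 \<le> \<rho>\<close>] after[OF False]] .
    then have "\<not> \<phi>1 \<rho> < rlim \<phi>1 \<rho>"
      using \<phi>1_jump_at(1)[OF \<open>0 \<le> \<rho>\<close>] at_l_right[OF \<rho>(1) \<open>\<rho> < t\<close>] c' by force
    then have "rlim \<eta> \<rho> = \<eta> \<rho>" "\<eta> \<rho> = c'"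
      using \<eta>_jump[OF \<open>0 \<le> \<rho>\<close>] mono_on_le_rlim[OF mono_\<phi>1 \<open>0 \<le> \<rho>\<close>]
        mono_on_jump_nonneg[OF mono_\<phi>2 \<open>0 \<le> \<rho>\<close>] \<open>c' \<le> \<eta> \<rho>\<close> \<open>rlim \<eta> \<rho> \<le> c'\<close> by linarith+
    then obtain p where p: "p \<in> {\<rho>..<t}" "gap x l p < (c - c') / 2"
        "max (\<eta> p) (rlim \<eta> p) < c' + (c - c') / 2"
      using \<eta>_descent_near_lower_barrier[OF \<open>0 \<le> \<rho>\<close> \<open>\<rho> < t\<close>, of "(c - c') / 2"] after[OF False] c'
      by auto
    have "c - (c - c') / 2 \<le> max (\<eta> p) (rlim \<eta> p)"
      using near[of p "(c - c') / 2"] p(1,2) \<rho> c' by auto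
    then show False
      using p(3) by argo
  qed
qed

lemma \<eta>_nonneg:
  assumes "0 \<le> t"
  shows "0 \<le> \<eta> t"
proof (rule \<eta>_ge_if_ge_near_lower_barrier[OF order.refl assms])
  show "0 \<le> max (\<eta> 0) (rlim \<eta> 0)"
    using \<eta>_0 by simp
  show "0 - d \<le> max (\<eta> r) (rlim \<eta> r)" if "0 \<le> r" "r \<le> t" "0 < d" "gap x l r < d" for r d
    using that l_le_xi[of r] rlim_l_le_rlim_xi[of r]
    by (auto simp: gap_def \<eta>_def rlim_\<eta> min_less_iff_disj)
  show "0 \<le> \<eta> r" if "0 \<le> r" "r \<le> t" "x r = l r" for r
    using that l_le_xi[of r] by (simp add: \<eta>_def)
  show "0 \<le> rlim \<eta> r" if "0 \<le> r" "r < t" "rlim x r = rlim l r" for r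
    using that rlim_l_le_rlim_xi[of r] by (simp add: rlim_\<eta>)
qed

lemma \<eta>_ge_if_excess_and_room:
  assumes st: "0 \<le> s" "s \<le> t" and c: "0 < c" "c < upper_excess s"
    and room: "\<And>r. s \<le> r \<Longrightarrow> r \<le> t \<Longrightarrow> c < lower_room r"
  shows "c \<le> \<eta> t"
proof (rule \<eta>_ge_if_ge_near_lower_barrier[OF st])
  have room': "c < \<xi> r - u r \<or> (c < \<xi> r - l r \<and> c < rlim \<xi> r - rlim l r)"
    if "s \<le> r" "r \<le> t" for r
    using room[OF that] by (auto simp: lower_room_def gap_def less_max_iff_disj)
  show "c \<le> max (\<eta> s) (rlim \<eta> s)"
    using c x_le_u[of s] rlim_x_le_rlim_u[of s] st
    by (auto simp: upper_excess_def \<eta>_def rlim_\<eta> less_max_iff_disj)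
  show "c - d \<le> max (\<eta> r) (rlim \<eta> r)"
    if "s \<le> r" "r \<le> t" "0 < d" "gap x l r < d" for r d
    using room'[OF that(1,2)] x_le_u[of r] that st
    by (auto simp: gap_def \<eta>_def rlim_\<eta> min_less_iff_disj)
  show "c \<le> \<eta> r" if "s \<le> r" "r \<le> t" "x r = l r" for r
    using room'[OF that(1,2)] x_le_u[of r] that st by (auto simp: \<eta>_def)
  show "c \<le> rlim \<eta> r" if r: "s \<le> r" "r < t" "rlim x r = rlim l r" for r
  proof -
    have "((\<lambda>q. \<xi> q - l q) \<longlongrightarrow> rlim \<xi> r - rlim l r) (at_right r)"
      using r st by (intro tendsto_diff tendsto_rlim_xi tendsto_rlim_l) auto
    then have "c \<le> rlim \<xi> r - rlim l r"
    proof (rule tendsto_at_right_lowerbound[OF _ r(2)])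
      fix q assume "r < q" "q < t"
      then show "c \<le> \<xi> q - l q"
        using room'[of q] x_le_u[of q] l_le_x[of q] r st by auto
    qed
    then show ?thesis
      using r st by (simp add: rlim_\<eta>)
  qed
qed

lemma Theta_le_\<eta>:
  assumes t: "0 \<le> t"
  shows "Theta u l \<xi> t \<le> \<eta> t"
  unfolding Theta_eq
proof (rule cSUP_least)
  fix s assume s: "s \<in> {0..t}"
  show "min (upper_excess s) (INF r\<in>{s..t}. lower_room r) \<le> \<eta> t"
  proof (rule ccontr)
    assume "\<not> ?thesis"
    then obtain c where c: "\<eta> t < c" "c < upper_excess s" "c < (INF r\<in>{s..t}. lower_room r)"
      using dense by (metis min_less_iff_conj not_le)
    have "c \<le> \<eta> t"
    proof (rule \<eta>_ge_if_excess_and_room)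
      show "0 < c"
        using \<eta>_nonneg[OF t] c(1) by simp
      show "c < lower_room r" if "s \<le> r" "r \<le> t" for r
        using c(3) cINF_lower[OF lower_room_bdd_below, of s r t] s that by force
    qed (use s c in auto)
    then show False
      using c(1) by simp
  qed
qed (use t in simp)

subsection \<open>\<open>\<eta> \<le> \<Theta>(\<xi>)\<close>\<close>

lemma upper_excess_after_upward_jump:
  assumes "0 \<le> \<sigma>" "\<sigma> < t" "\<eta> \<sigma> < rlim \<eta> \<sigma>" "0 < d"
  shows "\<exists>s\<in>{\<sigma><..t}. rlim \<eta> \<sigma> - d \<le> upper_excess s"
proof -
  have "rlim \<eta> \<sigma> = rlim \<xi> \<sigma> - rlim u \<sigma>"
    using \<eta>_jump_up[OF assms(1,3)] rlim_\<eta>[OF assms(1)] by simp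
  then have "((\<lambda>r. \<xi> r - u r) \<longlongrightarrow> rlim \<eta> \<sigma>) (at_right \<sigma>)"
    using tendsto_diff[OF tendsto_rlim_xi[OF assms(1)] tendsto_rlim_u[OF assms(1)]] by simp
  then obtain b where b: "\<sigma> < b" "\<And>r. \<sigma> < r \<Longrightarrow> r < b \<Longrightarrow> \<bar>\<xi> r - u r - rlim \<eta> \<sigma>\<bar> < d"
    using tendsto_at_right_realE assms(4) by blast
  define s where "s = min ((\<sigma> + b) / 2) t"
  have s: "\<sigma> < s" "s \<le> t" "s < b"
    using b(1) assms(2) by (auto simp: s_def min_less_iff_disj)
  have "\<xi> s - u s \<le> upper_excess s"
    by (simp add: upper_excess_def)
  then have "rlim \<eta> \<sigma> - d \<le> upper_excess s"
    using b(2)[OF s(1,3)] unfolding abs_less_iff by linarith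
  then show ?thesis
    using s by auto
qed

lemma \<eta>_le_upper_excess_at_barrier:
  assumes "0 \<le> \<sigma>" "0 < \<eta> \<sigma>" "gap \<xi> l \<sigma> \<le> 0 \<or> gap u x \<sigma> \<le> 0"
  shows "\<eta> \<sigma> \<le> upper_excess \<sigma>"
proof (rule \<eta>_le_upper_excess[OF assms(1)])
  from assms(3) show "x \<sigma> = u \<sigma> \<or> rlim x \<sigma> = rlim u \<sigma> \<or> rlim \<eta> \<sigma> < \<eta> \<sigma>"
  proof
    assume "gap \<xi> l \<sigma> \<le> 0"
    moreover have "0 < \<xi> \<sigma> - l \<sigma>"
      using assms(2) l_le_x[OF assms(1)] by (simp add: \<eta>_def)
    ultimately have "rlim \<xi> \<sigma> \<le> rlim l \<sigma>"
      by (simp add: gap_def)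
    then have "rlim \<eta> \<sigma> < \<eta> \<sigma>"
      using rlim_l_le_rlim_x[OF assms(1)] assms(2) by (simp add: rlim_\<eta>[OF assms(1)])
    then show ?thesis
      by simp
  next
    assume "gap u x \<sigma> \<le> 0"
    then show ?thesis
      using x_le_u[OF assms(1)] rlim_x_le_rlim_u[OF assms(1)] by (auto simp: gap_def)
  qed
qed

lemma rlim_\<eta>_ge_if_\<eta>_ge:
  assumes "0 \<le> p" "p \<le> t" "\<And>q. p \<le> q \<Longrightarrow> q \<le> t \<Longrightarrow> a \<le> \<eta> q" "p = t \<Longrightarrow> \<eta> t \<le> rlim \<eta> t"
  shows "a \<le> rlim \<eta> p"
proof (cases "p < t")
  case True
  show ?thesis
    by (rule tendsto_at_right_lowerbound[OF tendsto_rlim_\<eta>[OF assms(1)] True]) (use assms(3) in auto)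
next
  case False
  then show ?thesis
    using assms(2) assms(3)[of t] assms(4) by simp
qed

lemma excess_before_last_passage:
  assumes \<sigma>: "0 < \<sigma>" "\<sigma> \<le> t" "c \<le> \<eta> \<sigma>" and d: "0 < d" "2 * d < c"
    and after: "\<And>r. \<sigma> < r \<Longrightarrow> r \<le> t \<Longrightarrow> c \<le> \<eta> r"
    and at_t: "\<sigma> = t \<Longrightarrow> \<eta> t \<le> rlim \<eta> t"
    and below: "\<And>b. b < \<sigma> \<Longrightarrow> \<exists>e\<in>{b<..<\<sigma>}. \<eta> e < c"
  shows "\<exists>s\<in>{0..t}. c - 2 * d \<le> upper_excess s \<and> (\<forall>r\<in>{s..t}. c - 2 * d \<le> \<eta> r)"
proof (cases "gap \<xi> l \<sigma> \<le> 0 \<or> gap u x \<sigma> \<le> 0")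
  case True
  then have "\<eta> \<sigma> \<le> upper_excess \<sigma>"
    using \<eta>_le_upper_excess_at_barrier[of \<sigma>] \<sigma> d by simp
  moreover have "c - 2 * d \<le> \<eta> r" if "r \<in> {\<sigma>..t}" for r
    using after[of r] \<sigma>(3) d that by (cases "r = \<sigma>") auto
  ultimately show ?thesis
    using \<sigma> d by (intro bexI[of _ \<sigma>]) auto
next
  case False
  obtain r where r: "r \<in> {0..<\<sigma>}" "\<forall>p\<in>{r..\<sigma>}. \<eta> \<sigma> - d < \<eta> p"
    using \<eta>_no_rise_from_left[of \<sigma> d] False \<sigma>(1) d(1) by auto
  have \<eta>_near: "c - d \<le> \<eta> q" if "r \<le> q" "q \<le> t" for q
  proof (cases "q \<le> \<sigma>")
    case True
    then have "\<eta> \<sigma> - d < \<eta> q"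
      using r(2) that(1) by simp
    then show ?thesis
      using \<sigma>(3) by simp
  next
    case False
    then show ?thesis
      using after[of q] that(2) d(1) by simp
  qed
  obtain e where e: "r < e" "e < \<sigma>" "\<eta> e < c"
    using below[of r] r(1) by auto
  have "0 \<le> e" "\<eta> e < \<eta> \<sigma>"
    using e r(1) \<sigma>(3) by auto
  then obtain p where p: "e \<le> p" "p \<le> \<sigma>" "gap \<xi> l p < d \<or> gap u x p < d"
    using near_barrier_if_\<eta>_increases[of e \<sigma> d] e(2) d(1) by auto
  have "0 \<le> p" "r \<le> p" "p \<le> t"
    using p(1,2) e(1) r(1) \<sigma>(2) by auto
  have "c - d \<le> rlim \<eta> p"
    by (rule rlim_\<eta>_ge_if_\<eta>_ge[OF \<open>0 \<le> p\<close> \<open>p \<le> t\<close>])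
      (use \<eta>_near \<open>r \<le> p\<close> at_t p(2) \<sigma>(2) in auto)
  then have min: "c - d \<le> min (\<eta> p) (rlim \<eta> p)"
    using \<eta>_near[OF \<open>r \<le> p\<close> \<open>p \<le> t\<close>] by simp
  have "\<not> gap \<xi> l p < d"
    using min_\<eta>_lt_if_near_lower[OF \<open>0 \<le> p\<close>] min d(2) by force
  then have "c - 2 * d \<le> upper_excess p"
    using upper_excess_gt_if_near_upper[OF \<open>0 \<le> p\<close>, of d] p(3) min by linarith
  moreover have "c - 2 * d \<le> \<eta> q" if "q \<in> {p..t}" for q
    using \<eta>_near[of q] \<open>r \<le> p\<close> d(1) that by auto
  ultimately show ?thesis
    using \<open>0 \<le> p\<close> p(2) \<sigma>(2) by (intro bexI[of _ p]) auto
qed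

lemma excursion_start:
  assumes t: "0 \<le> t" "\<eta> t \<le> rlim \<eta> t" and d: "0 < d" "2 * d < \<eta> t"
  shows "\<exists>s\<in>{0..t}. \<eta> t - 2 * d \<le> upper_excess s \<and> (\<forall>r\<in>{s..t}. \<eta> t - 2 * d \<le> \<eta> r)"
proof -
  define D where "D = {r\<in>{0..t}. \<eta> r < \<eta> t}"
  have "0 \<in> D" "D \<subseteq> {0..t}"
    using \<eta>_0 d t by (auto simp: D_def)
  then obtain \<sigma> where \<sigma>: "0 \<le> \<sigma>" "\<sigma> \<le> t" and not_D: "\<And>r. \<sigma> < r \<Longrightarrow> r \<notin> D"
    and D_accumulates: "\<And>b. \<sigma> \<notin> D \<Longrightarrow> b < \<sigma> \<Longrightarrow> \<exists>e\<in>{b<..<\<sigma>}. e \<in> D"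
    using last_passage by blast
  have after: "\<eta> t \<le> \<eta> r" if "\<sigma> < r" "r \<le> t" for r
    using not_D[OF that(1)] that \<sigma>(1) by (auto simp: D_def)
  show ?thesis
  proof (cases "\<eta> \<sigma> < \<eta> t")
    case True
    then have "\<sigma> < t"
      using \<sigma>(2) by (cases "\<sigma> = t") auto
    have "\<eta> t \<le> rlim \<eta> \<sigma>"
      by (rule tendsto_at_right_lowerbound[OF tendsto_rlim_\<eta> \<open>\<sigma> < t\<close>]) (use after \<sigma> in auto)
    then obtain s where s: "s \<in> {\<sigma><..t}" "rlim \<eta> \<sigma> - d \<le> upper_excess s"
      using upper_excess_after_upward_jump[OF \<sigma>(1) \<open>\<sigma> < t\<close> _ d(1)] True by force
    have "\<eta> t - 2 * d \<le> upper_excess s"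
      using s(2) \<open>\<eta> t \<le> rlim \<eta> \<sigma>\<close> d(1) by linarith
    moreover have "\<eta> t - 2 * d \<le> \<eta> r" if "r \<in> {s..t}" for r
      using after[of r] s(1) that d(1) by auto
    ultimately show ?thesis
      using s(1) \<sigma>(1) by (intro bexI[of _ s]) auto
  next
    case False
    then have "\<sigma> \<notin> D"
      by (simp add: D_def)
    have "0 < \<sigma>"
      using False \<eta>_0 d \<sigma>(1) by (cases "\<sigma> = 0") auto
    moreover have "\<exists>e\<in>{b<..<\<sigma>}. \<eta> e < \<eta> t" if "b < \<sigma>" for b
      using D_accumulates[OF \<open>\<sigma> \<notin> D\<close> that] by (auto simp: D_def)
    ultimately show ?thesis
      using excess_before_last_passage[OF _ \<sigma>(2) _ d after] False t(2) by force
  qed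
qed

lemma Theta_ge_if_excess_and_\<eta>_ge:
  assumes s: "s \<in> {0..t}" "c \<le> upper_excess s" "\<forall>r\<in>{s..t}. c \<le> \<eta> r"
  shows "c \<le> Theta u l \<xi> t"
proof -
  have bdd: "bdd_above ((\<lambda>s. min (upper_excess s) (INF r\<in>{s..t}. lower_room r)) ` {0..t})"
  proof (rule bdd_aboveI[of _ "lower_room t"])
    fix z assume "z \<in> (\<lambda>s. min (upper_excess s) (INF r\<in>{s..t}. lower_room r)) ` {0..t}"
    then obtain s' where s': "s' \<in> {0..t}" "z = min (upper_excess s') (INF r\<in>{s'..t}. lower_room r)"
      by blast
    have "(INF r\<in>{s'..t}. lower_room r) \<le> lower_room t"
      by (rule cINF_lower[OF lower_room_bdd_below]) (use s'(1) in auto)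
    then show "z \<le> lower_room t"
      unfolding s'(2) by (rule min.coboundedI2)
  qed
  have "c \<le> (INF r\<in>{s..t}. lower_room r)"
  proof (rule cINF_greatest)
    show "{s..t} \<noteq> {}"
      using s(1) by simp
    fix r assume r: "r \<in> {s..t}"
    then have "c \<le> \<eta> r"
      using s(3) by blast
    then show "c \<le> lower_room r"
      using \<eta>_le_lower_room[of r] r s(1) by simp
  qed
  then have "c \<le> min (upper_excess s) (INF r\<in>{s..t}. lower_room r)"
    using s(2) by simp
  also have "\<dots> \<le> Theta u l \<xi> t"
    unfolding Theta_eq by (rule cSUP_upper[OF s(1) bdd])
  finally show ?thesis .
qed

lemma \<eta>_le_Theta:
  assumes t: "0 \<le> t"
  shows "\<eta> t \<le> Theta u l \<xi> t"
proof (cases "rlim \<eta> t < \<eta> t")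
  case True
  then have "\<eta> t \<le> upper_excess t"
    using \<eta>_le_upper_excess[OF t] by blast
  then show ?thesis
    using Theta_ge_if_excess_and_\<eta>_ge[of t t "\<eta> t"] t by simp
next
  case False
  show ?thesis
  proof (rule field_le_epsilon)
    fix e :: real assume "0 < e"
    show "\<eta> t \<le> Theta u l \<xi> t + e"
    proof (cases "\<eta> t \<le> e")
      case True
      have "0 \<le> upper_excess t"
        by (simp add: upper_excess_def)
      then have "0 \<le> Theta u l \<xi> t"
        using Theta_ge_if_excess_and_\<eta>_ge[of t t 0] t \<eta>_nonneg[OF t] by simp
      then show ?thesis
        using True by simp
    next
      case False
      then obtain s where "s \<in> {0..t}" "\<eta> t - 2 * (e / 2) \<le> upper_excess s"
          "\<forall>r\<in>{s..t}. \<eta> t - 2 * (e / 2) \<le> \<eta> r"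
        using excursion_start[OF t, of "e / 2"] \<open>\<not> rlim \<eta> t < \<eta> t\<close> \<open>0 < e\<close> by auto
      then have "\<eta> t - 2 * (e / 2) \<le> Theta u l \<xi> t"
        by (rule Theta_ge_if_excess_and_\<eta>_ge)
      then show ?thesis
        by simp
    qed
  qed
qed

theorem x_eq_xi_minus_Theta:
  assumes "0 \<le> t"
  shows "x t = \<xi> t - Theta u l \<xi> t"
  using Theta_le_\<eta>[OF assms] \<eta>_le_Theta[OF assms] unfolding \<eta>_def by linarith

end

text \<open>The hypotheses on \<open>l\<close>, \<open>u\<close> and \<open>y 0\<close> only guarantee that \<open>RP1\<close> and \<open>RP2\<close> are solvable;
  the identity holds for any pair of solutions.\<close>

theorem proposition1:
  fixes l u y \<xi> \<kappa> x k :: "real \<Rightarrow> real"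
  assumes "regulated l" and "regulated u"
    and "\<forall>t\<ge>0. l t \<le> u t"
    and "\<forall>t\<ge>0. (INF s\<in>{0..t}. u s - l s) > 0"
    and "regulated y" and "l 0 \<le> y 0" and "y 0 \<le> u 0"
    and "RP1 l y \<xi> \<kappa>"
    and "RP2 l u y x k"
  shows "\<forall>t\<ge>0. x t = \<xi> t - Theta u l \<xi> t"
proof -
  have "\<exists>\<phi>1 \<phi>2. barrier_solutions l u y \<xi> \<kappa> x \<phi>1 \<phi>2"
    using assms(1,2,5,8,9) unfolding RP2_def barrier_solutions_def gap_def
    by (elim conjE exE) (intro exI conjI; auto)
  then obtain \<phi>1 \<phi>2 where "barrier_solutions l u y \<xi> \<kappa> x \<phi>1 \<phi>2"
    by blast
  then interpret barrier_solutions l u y \<xi> \<kappa> x \<phi>1 \<phi>2 .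
  show ?thesis
    using x_eq_xi_minus_Theta by blast
qed

end
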